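(* Let $\vec r:\mathbb{Z}\to\mathbb{R}^3$ be a discrete centroaffine space curve with constant invariants $\kappa_n=\kappa$, $\bar\kappa_n=\bar\kappa$, $\tau_n=\tau$, let $\alpha\in(0,1)$ be a constant, and define $\vec r'_n=(1-\alpha)\vec r_n+\alpha\vec r_{n+1}$ (iteration of the definite proportional division point). If $\vec r'$ is again a discrete centroaffine space curve, then its invariants satisfy $\kappa'_n=\kappa$, $\bar\kappa'_n=\bar\kappa$, $\tau'_n=\tau$ for all $n$.
   Context: A discrete centroaffine space curve is a map $\vec r:\mathbb{Z}\to\mathbb{R}^3$ with $[\vec r_{k-1},\vec r_k,\vec r_{k+1}]\ne0$ for all $k$, where $\vec r_k=\vec r(k)$, $[\cdot,\cdot,\cdot]$ is the $3\times3$ determinant and $\vec t_k=\vec r_{k+1}-\vec r_k$. With $D_k=[\vec r_{k-1},\vec r_k,\vec r_{k+1}]$: $\kappa_k=\frac{[\vec r_k,\vec r_{k+1},\vec r_{k+2}]}{D_k}$, $\bar\kappa_k=\frac{[\vec r_{k+1},\vec t_{k-1},\vec t_{k+1}]}{D_k}$, $\tau_k=\frac{[\vec t_{k-1},\vec t_k,\vec t_{k+1}]}{D_k}$ (first/second centroaffine curvature and centroaffine torsion). *)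

theory Defs
  imports "HOL-Analysis.Analysis"
begin

definition det3 :: "real^3 \<Rightarrow> real^3 \<Rightarrow> real^3 \<Rightarrow> real" where
  "det3 a b c = det (vector [a, b, c] :: real^3^3)"

definition centroaffine_curve :: "(int \<Rightarrow> real^3) \<Rightarrow> bool" where
  "centroaffine_curve r \<longleftrightarrow> (\<forall>k. det3 (r (k - 1)) (r k) (r (k + 1)) \<noteq> 0)"

definition tangent :: "(int \<Rightarrow> real^3) \<Rightarrow> int \<Rightarrow> real^3" where
  "tangent r k = r (k + 1) - r k"

definition Dc :: "(int \<Rightarrow> real^3) \<Rightarrow> int \<Rightarrow> real" where
  "Dc r k = det3 (r (k - 1)) (r k) (r (k + 1))"

definition kappa :: "(int \<Rightarrow> real^3) \<Rightarrow> int \<Rightarrow> real" where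
  "kappa r k = det3 (r k) (r (k + 1)) (r (k + 2)) / Dc r k"

definition kappa_bar :: "(int \<Rightarrow> real^3) \<Rightarrow> int \<Rightarrow> real" where
  "kappa_bar r k = det3 (r (k + 1)) (tangent r (k - 1)) (tangent r (k + 1)) / Dc r k"

definition torsion :: "(int \<Rightarrow> real^3) \<Rightarrow> int \<Rightarrow> real" where
  "torsion r k = det3 (tangent r (k - 1)) (tangent r k) (tangent r (k + 1)) / Dc r k"

end

theory Submission
  imports Defs
begin

text \<open>A nondegenerate curve satisfies a three-term linear recurrence
  \<open>r (k+2) = A r (k+1) + B r k + C r (k-1)\<close> whose coefficients are determined by, and determine,
  the invariants at \<open>k\<close>: \<open>\<kappa> = C\<close>, \<open>\<kappa>b = -(B+C)\<close>, \<open>\<tau> = A-1+B+C\<close>. Constant invariants thus mean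
  one recurrence with constant coefficients; it is linear and shift invariant, so every
  combination \<open>(1-\<alpha>) r n + \<alpha> r (n+1)\<close> satisfies it as well and hence has the same invariants.\<close>

lemma det3_expand:
  "det3 x y z =
     x$1*y$2*z$3 - x$1*y$3*z$2 - x$2*y$1*z$3 + x$2*y$3*z$1 + x$3*y$1*z$2 - x$3*y$2*z$1"
  unfolding det3_def det_3 by (simp add: vector_3 algebra_simps)

lemma det3_cramer:
  "det3 x y z *\<^sub>R w = det3 w y z *\<^sub>R x + det3 x w z *\<^sub>R y + det3 x y w *\<^sub>R z"
  unfolding vec_eq_iff forall_3 det3_expand by (simp add: algebra_simps)

lemma det3_basis_decomposition:
  assumes "det3 x y z \<noteq> 0"
  obtains a b c where "w = a *\<^sub>R z + b *\<^sub>R y + c *\<^sub>R x"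
proof
  let ?d = "det3 x y z"
  have "?d *\<^sub>R w = ?d *\<^sub>R ((det3 x y w / ?d) *\<^sub>R z + (det3 x w z / ?d) *\<^sub>R y + (det3 w y z / ?d) *\<^sub>R x)"
    using det3_cramer[of x y z w] assms by (simp add: scaleR_add_right algebra_simps)
  then show "w = (det3 x y w / ?d) *\<^sub>R z + (det3 x w z / ?d) *\<^sub>R y + (det3 w y z / ?d) *\<^sub>R x"
    using assms by simp
qed

lemma det3_of_recurrence:
  fixes x y z w :: "real^3"
  assumes "w = A *\<^sub>R z + B *\<^sub>R y + C *\<^sub>R x"
  shows "det3 y z w = C * det3 x y z"
    and "det3 z (y - x) (w - z) = -(B + C) * det3 x y z"
    and "det3 (y - x) (z - y) (w - z) = (A - 1 + B + C) * det3 x y z"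
  unfolding assms det3_expand by (simp_all add: algebra_simps)

lemma invariants_of_recurrence:
  assumes nondeg: "Dc r k \<noteq> 0"
    and rec: "r (k + 2) = A *\<^sub>R r (k + 1) + B *\<^sub>R r k + C *\<^sub>R r (k - 1)"
  shows "kappa r k = C" and "kappa_bar r k = -(B + C)" and "torsion r k = A - 1 + B + C"
proof -
  have tangents: "tangent r (k - 1) = r k - r (k - 1)" "tangent r k = r (k + 1) - r k"
    "tangent r (k + 1) = r (k + 2) - r (k + 1)"
    unfolding tangent_def by (simp_all add: add.assoc)
  note dets = det3_of_recurrence[OF rec]
  have d: "det3 (r (k - 1)) (r k) (r (k + 1)) \<noteq> 0"
    using nondeg unfolding Dc_def .
  show "kappa r k = C"
    unfolding kappa_def Dc_def add.assoc one_add_one dets(1) using d by simp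
  show "kappa_bar r k = -(B + C)"
    unfolding kappa_bar_def Dc_def tangents dets(2) using d by simp
  show "torsion r k = A - 1 + B + C"
    unfolding torsion_def Dc_def tangents dets(3) using d by simp
qed

lemma recurrence_of_invariants:
  assumes nondeg: "Dc r k \<noteq> 0"
  shows "r (k + 2) = (torsion r k + 1 + kappa_bar r k) *\<^sub>R r (k + 1)
                     - (kappa_bar r k + kappa r k) *\<^sub>R r k + kappa r k *\<^sub>R r (k - 1)"
proof -
  obtain A B C where rec: "r (k + 2) = A *\<^sub>R r (k + 1) + B *\<^sub>R r k + C *\<^sub>R r (k - 1)"
    using det3_basis_decomposition nondeg unfolding Dc_def by metis
  note inv = invariants_of_recurrence[OF nondeg rec]
  show ?thesis
    unfolding inv rec by (simp add: algebra_simps)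
qed

lemma recurrence_combination_of_shifts:
  fixes r s :: "int \<Rightarrow> 'a::real_vector"
  assumes rec: "\<And>k. r (k + 2) = A *\<^sub>R r (k + 1) + B *\<^sub>R r k + C *\<^sub>R r (k - 1)"
    and s: "\<And>n. s n = u *\<^sub>R r n + v *\<^sub>R r (n + 1)"
  shows "s (k + 2) = A *\<^sub>R s (k + 1) + B *\<^sub>R s k + C *\<^sub>R s (k - 1)"
proof -
  have shifted: "r (k + 2 + 1) = A *\<^sub>R r (k + 2) + B *\<^sub>R r (k + 1) + C *\<^sub>R r k"
    using rec[of "k + 1"] by (simp add: add.assoc add.commute)
  have indices: "k + 1 + 1 = k + 2" "k - 1 + 1 = k"
    by simp_all
  show ?thesis
    unfolding s indices shifted rec[of k] by (simp add: algebra_simps)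
qed

theorem proposition7p2:
  fixes r :: "int \<Rightarrow> real^3" and \<kappa> \<kappa>b \<tau> \<alpha> :: real
  assumes "centroaffine_curve r"
    and "\<And>n. kappa r n = \<kappa>"
    and "\<And>n. kappa_bar r n = \<kappa>b"
    and "\<And>n. torsion r n = \<tau>"
    and "0 < \<alpha>" and "\<alpha> < 1"
    and "centroaffine_curve (\<lambda>n. (1 - \<alpha>) *\<^sub>R r n + \<alpha> *\<^sub>R r (n + 1))"
  shows "\<forall>n. kappa (\<lambda>n. (1 - \<alpha>) *\<^sub>R r n + \<alpha> *\<^sub>R r (n + 1)) n = \<kappa>
            \<and> kappa_bar (\<lambda>n. (1 - \<alpha>) *\<^sub>R r n + \<alpha> *\<^sub>R r (n + 1)) n = \<kappa>b
            \<and> torsion (\<lambda>n. (1 - \<alpha>) *\<^sub>R r n + \<alpha> *\<^sub>R r (n + 1)) n = \<tau>"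
proof
  fix n
  define s where "s = (\<lambda>n. (1 - \<alpha>) *\<^sub>R r n + \<alpha> *\<^sub>R r (n + 1))"
  have rec: "r (k + 2) = (\<tau> + 1 + \<kappa>b) *\<^sub>R r (k + 1) + (- \<kappa>b - \<kappa>) *\<^sub>R r k + \<kappa> *\<^sub>R r (k - 1)" for k
  proof -
    have "Dc r k \<noteq> 0"
      using assms(1) unfolding centroaffine_curve_def Dc_def by blast
    from recurrence_of_invariants[OF this] show ?thesis
      unfolding assms(2-4) by (simp add: algebra_simps)
  qed
  have "s (n + 2) = (\<tau> + 1 + \<kappa>b) *\<^sub>R s (n + 1) + (- \<kappa>b - \<kappa>) *\<^sub>R s n + \<kappa> *\<^sub>R s (n - 1)"
    by (rule recurrence_combination_of_shifts[OF rec]) (simp add: s_def)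
  moreover have "Dc s n \<noteq> 0"
    using assms(7) unfolding centroaffine_curve_def Dc_def s_def by blast
  ultimately show "kappa s n = \<kappa> \<and> kappa_bar s n = \<kappa>b \<and> torsion s n = \<tau>"
    using invariants_of_recurrence by simp
qed

end
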